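(* Consider a time series with baseline variables $X$ whose index sets satisfy $\{N,M,C\}\subseteq V$ (outcome process $N$, mediator process $M$, covariate process $C$; $V$ may contain further, e.g. unobserved, processes) and $\{A^D,A^M\}\subseteq W$ (treatment components, baseline). Suppose that for every $t\ge 1$ there is a DAG $D_t$ on the node set $V^t\cup W^t$ such that the $d$-separation Markov property holds in $D_t$ for the distribution of $X$ (the interventional distribution under $do(A^D=a,A^M=a^* )$), and such that the only contemporaneous edges of $D_t$ are of the form $\nu_s^N\to\nu_s^M$ and $\nu_s^N\to\nu_s^C$. Let $D$ be the tailed directed graph on $V\cup W$ containing $i\to j$ (resp. $i\bullet\!\!\to j$) if and only if this edge is in the rolled version of $D_t$ for some $t$. Then, for every lag $k\ge 1$: (i) if $M$ is $\delta$-separated from $A^D$ given $\{A^M,C,N\}$ in $D$, then $A^D$ and $X_k^M$ are conditionally independent given $(A^M,\overline X^M_{k-1},\overline X^C_{k-1},\overline X^N_k)$; (ii) if $C$ is $\delta$-separated from $A^M$ given $\{A^D,M,N\}$ in $D$, then $A^M$ and $X_k^C$ are conditionally independent given $(A^D,\overline X^M_{k},\overline X^C_{k-1},\overline X^N_k)$; (iii) if $N$ is $\delta$-separated from $A^M$ given $\{A^D,C,M\}$ in $D$, then $A^M$ and $X_k^N$ are conditionally independent given $(A^D,\overline X^M_{k-1},\overline X^C_{k-1},\overline X^N_{k-1})$.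
   Context: Time series with baseline variables: $V$, $W$ finite disjoint index sets; $X_0$ is a random vector indexed by $V\cup W$, $X_t$ ($t\ge1$) indexed by $V$. $X_t^A$ is the subvector indexed by $A$, $\overline X_t^A=\{X_s^i:i\in A,s\le t\}$; baseline variables are written simply as $A^D$, $A^M$. In the survival application $X_k^N$ is the indicator of $T>t_k$, and $X^M_k,X^C_k$ are mediator and covariate measurements at time $t_k$. Unrolled node set: $V^t=\bigcup_{i\in V}\{\nu_0^i,\dots,\nu_t^i\}$, $W^t=\{\nu_0^i:i\in W\}$; node $\nu_s^i$ represents $X_s^i$. An edge $\nu_s^i\to\nu_u^j$ is contemporaneous if $s=u$. The $d$-separation Markov property holds in $D_t$ if $d$-separation of node sets $a,b$ by $c$ implies conditional independence of the corresponding variables given those of $c$. Rolled version of a DAG $D_t$: the tailed directed graph with $i\ast\!\!\to j$ if $\nu_s^i\to\nu_u^j$ for some $s\le u$ and $i\bullet\!\!\to j$ iff $\nu_u^i\to\nu_u^j$ for some $u$ (here $i\ast\!\!\to j$ means $i\to j$ or $i\bullet\!\!\to j$, and $i\to j$ is omitted when $i\bullet\!\!\to j$ is present). Standing assumption: whenever $\nu_u^i\to\nu_u^j$ is present, so is $\nu_s^i\to\nu_r^j$ for some $s<r$. $\delta$-separation: for a tailed directed graph $D$ let $D^-$ be the DG with $i\to j$ iff $i\ast\!\!\to j$ in $D$, and $(D^-)^B$ the DG obtained by deleting all edges $i\to j$ with $i\in B$. $B$ is $\delta$-separated from $A$ given $C$ in $D$ if every path (walk without repeated nodes) in $(D^-)^B$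 between $A$ and $B$ contains a noncollider in $C$ or a collider (non-endpoint node with both adjacent edges pointing into it) not in $\mathrm{an}(C)\cup C$, ancestors taken in $D^-$. *)

theory Defs
  imports "HOL-Probability.Probability"
begin

text \<open>Nodes of the unrolled graph: (i, s) stands for the node nu_s^i, i.e. the variable X_s^i.\<close>

definition is_path :: "('v \<times> 'v) set \<Rightarrow> 'v list \<Rightarrow> bool list \<Rightarrow> bool" where
  "is_path E ps ds \<longleftrightarrow> ps \<noteq> [] \<and> distinct ps \<and> length ds = length ps - 1 \<and>
     (\<forall>k < length ds. (if ds ! k then (ps ! k, ps ! Suc k) \<in> E else (ps ! Suc k, ps ! k) \<in> E))"

definition collider_at :: "bool list \<Rightarrow> nat \<Rightarrow> bool" where
  "collider_at ds k \<longleftrightarrow> ds ! (k - 1) \<and> \<not> ds ! k"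

definition ancestors :: "('v \<times> 'v) set \<Rightarrow> 'v set \<Rightarrow> 'v set" where
  "ancestors E C = {x. \<exists>y\<in>C. (x, y) \<in> E\<^sup>*}"   \<comment> \<open>contains C, i.e. this is an(C) \<union> C\<close>

definition separated :: "('v \<times> 'v) set \<Rightarrow> ('v \<times> 'v) set \<Rightarrow> 'v set \<Rightarrow> 'v set \<Rightarrow> 'v set \<Rightarrow> bool" where
  "separated Ep Ea A B C \<longleftrightarrow>
     (\<forall>ps ds. is_path Ep ps ds \<and> (hd ps \<in> A \<and> last ps \<in> B \<or> hd ps \<in> B \<and> last ps \<in> A) \<longrightarrow>
        (\<exists>k. 0 < k \<and> k < length ps - 1 \<and>
           ((\<not> collider_at ds k \<and> ps ! k \<in> C) \<or> (collider_at ds k \<and> ps ! k \<notin> ancestors Ea C))))"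

definition d_separated :: "('v \<times> 'v) set \<Rightarrow> 'v set \<Rightarrow> 'v set \<Rightarrow> 'v set \<Rightarrow> bool" where
  "d_separated E A B C \<longleftrightarrow> separated E E A B C"

definition is_dag_on :: "'v set \<Rightarrow> ('v \<times> 'v) set \<Rightarrow> bool" where
  "is_dag_on Nd E \<longleftrightarrow> E \<subseteq> Nd \<times> Nd \<and> acyclic E"

definition unrolled_nodes :: "'i set \<Rightarrow> 'i set \<Rightarrow> nat \<Rightarrow> ('i \<times> nat) set" where
  "unrolled_nodes V W t = {(i, s). i \<in> V \<and> s \<le> t} \<union> {(i, 0) | i. i \<in> W}"

text \<open>Rolled version of an unrolled DAG: a tailed directed graph, represented by its set of
  plain edges i -> j and its set of tailed edges i \<bullet>-> j.\<close>
definition rolled_tailed :: "(('i \<times> nat) \<times> ('i \<times> nat)) set \<Rightarrow> ('i \<times> 'i) set" where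
  "rolled_tailed E = {(i, j). \<exists>u. ((i, u), (j, u)) \<in> E}"

definition rolled_plain :: "(('i \<times> nat) \<times> ('i \<times> nat)) set \<Rightarrow> ('i \<times> 'i) set" where
  "rolled_plain E = {(i, j). \<exists>s u. s \<le> u \<and> ((i, s), (j, u)) \<in> E} - rolled_tailed E"

definition minus_graph :: "('i \<times> 'i) set \<Rightarrow> ('i \<times> 'i) set \<Rightarrow> ('i \<times> 'i) set" where
  "minus_graph P T = P \<union> T"

definition delta_separated :: "('i \<times> 'i) set \<Rightarrow> ('i \<times> 'i) set \<Rightarrow> 'i set \<Rightarrow> 'i set \<Rightarrow> 'i set \<Rightarrow> bool" where
  "delta_separated P T B A C \<longleftrightarrow>
     separated {e \<in> minus_graph P T. fst e \<notin> B} (minus_graph P T) A B C"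

definition gen_sigma :: "'a measure \<Rightarrow> ('n \<Rightarrow> 'a \<Rightarrow> 'b) \<Rightarrow> ('n \<Rightarrow> 'b measure) \<Rightarrow> 'n set \<Rightarrow> 'a measure" where
  "gen_sigma Pr X Sp S = sigma (space Pr) (\<Union>n\<in>S. {X n -` B \<inter> space Pr | B. B \<in> sets (Sp n)})"

definition cond_indep :: "'a measure \<Rightarrow> ('n \<Rightarrow> 'a \<Rightarrow> 'b) \<Rightarrow> ('n \<Rightarrow> 'b measure) \<Rightarrow> 'n set \<Rightarrow> 'n set \<Rightarrow> 'n set \<Rightarrow> bool" where
  "cond_indep Pr X Sp A B C \<longleftrightarrow>
     (\<forall>EA \<in> sets (gen_sigma Pr X Sp A). \<forall>EB \<in> sets (gen_sigma Pr X Sp B).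
        AE x in Pr. real_cond_exp Pr (gen_sigma Pr X Sp C) (indicator (EA \<inter> EB)) x =
          real_cond_exp Pr (gen_sigma Pr X Sp C) (indicator EA) x *
          real_cond_exp Pr (gen_sigma Pr X Sp C) (indicator EB) x)"

end

theory Submission
  imports Defs
begin

text \<open>Fix the lag k and work in the unrolled DAG E k, whose Markov property turns d-separation
  into conditional independence. Suppose a path d-connects (A, 0) and (T, k) given the conditioning
  set c, and project it onto process labels. The projection can fail to be delta-connecting in
  the rolled graph only through an edge leaving a T-node or a collider whose label is not an
  ancestor of S. Both are removed by cutting the path at the first such collider (or at its
  first T-node) and continuing along a directed path into c; because contemporaneous edges only
  go from N to M and C, this directed path must end in an earlier T-node, and the path enters
  its first T-node by a forward edge. Shortcutting the resulting walk gives a path that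
  delta-connects A and T given S.\<close>

definition edge_at :: "'v list \<Rightarrow> bool list \<Rightarrow> nat \<Rightarrow> 'v \<times> 'v" where
  "edge_at ps ds k = (if ds ! k then (ps ! k, ps ! Suc k) else (ps ! Suc k, ps ! k))"

definition is_walk :: "('v \<times> 'v) set \<Rightarrow> 'v list \<Rightarrow> bool list \<Rightarrow> bool" where
  "is_walk E ps ds \<longleftrightarrow>
     ps \<noteq> [] \<and> length ds = length ps - 1 \<and> (\<forall>k < length ds. edge_at ps ds k \<in> E)"

definition unblocked_at :: "('v \<times> 'v) set \<Rightarrow> 'v set \<Rightarrow> 'v list \<Rightarrow> bool list \<Rightarrow> nat \<Rightarrow> bool" where
  "unblocked_at Ea C ps ds k \<longleftrightarrow>
     (if collider_at ds k then ps ! k \<in> ancestors Ea C else ps ! k \<notin> C)"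

definition connecting_walk ::
    "('v \<times> 'v) set \<Rightarrow> ('v \<times> 'v) set \<Rightarrow> 'v set \<Rightarrow> 'v list \<Rightarrow> bool list \<Rightarrow> bool" where
  "connecting_walk Ep Ea C ps ds \<longleftrightarrow>
     is_walk Ep ps ds \<and> (\<forall>k. 0 < k \<and> k < length ps - 1 \<longrightarrow> unblocked_at Ea C ps ds k)"

lemma is_path_iff_walk: "is_path E ps ds \<longleftrightarrow> is_walk E ps ds \<and> distinct ps"
  unfolding is_path_def is_walk_def edge_at_def by auto

lemma separated_iff_no_connecting_path:
  "separated Ep Ea A B C \<longleftrightarrow> \<not> (\<exists>ps ds. connecting_walk Ep Ea C ps ds \<and> distinct ps \<and>
      (hd ps \<in> A \<and> last ps \<in> B \<or> hd ps \<in> B \<and> last ps \<in> A))"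
  unfolding separated_def connecting_walk_def is_path_iff_walk unblocked_at_def by auto

lemma is_walk_forward_edge:
  "is_walk E ps ds \<Longrightarrow> p < length ds \<Longrightarrow> ds ! p \<Longrightarrow> (ps ! p, ps ! Suc p) \<in> E"
  unfolding is_walk_def edge_at_def by auto

lemma is_walk_backward_edge:
  "is_walk E ps ds \<Longrightarrow> p < length ds \<Longrightarrow> \<not> ds ! p \<Longrightarrow> (ps ! Suc p, ps ! p) \<in> E"
  unfolding is_walk_def edge_at_def by auto

lemma ancestors_pred: "(x, y) \<in> E \<Longrightarrow> y \<in> ancestors E C \<Longrightarrow> x \<in> ancestors E C"
  unfolding ancestors_def by (blast intro: converse_rtrancl_into_rtrancl)

text \<open>The run of forward edges starting at i ends in a collider no later than j.\<close>
lemma connecting_walk_forward_run: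
  assumes cw: "connecting_walk Ep Ea C ps ds" and sub: "Ep \<subseteq> Ea"
    and "ds ! i" "i < j" "\<not> ds ! j" "j < length ps - 1"
  shows "ps ! i \<in> ancestors Ea C"
proof -
  have w: "is_walk Ep ps ds" and lds: "length ds = length ps - 1"
    using cw unfolding connecting_walk_def is_walk_def by auto
  have "ds ! n \<longrightarrow> ps ! n \<in> ancestors Ea C" if "n \<le> j" for n
    using that
  proof (induction n rule: inc_induct)
    case base
    then show ?case using \<open>\<not> ds ! j\<close> by simp
  next
    case (step n)
    show ?case
    proof
      assume "ds ! n"
      have "ps ! Suc n \<in> ancestors Ea C"
      proof (cases "ds ! Suc n")
        case True
        then show ?thesis using step.IH by simp
      next
        case False
        then have "collider_at ds (Suc n)" using \<open>ds ! n\<close> unfolding collider_at_def by simp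
        then show ?thesis
          using cw step.hyps \<open>j < length ps - 1\<close> unfolding connecting_walk_def unblocked_at_def
          by auto
      qed
      moreover have "(ps ! n, ps ! Suc n) \<in> Ea"
        using is_walk_forward_edge[OF w] \<open>ds ! n\<close> step.hyps \<open>j < length ps - 1\<close> lds sub by auto
      ultimately show "ps ! n \<in> ancestors Ea C" by (rule ancestors_pred[rotated])
    qed
  qed
  then show ?thesis using \<open>ds ! i\<close> \<open>i < j\<close> by simp
qed

text \<open>Cutting out the loop between positions i and j of a walk leaves a node entered as at i
  and left as at j.\<close>
lemma connecting_walk_junction:
  assumes cw: "connecting_walk Ep Ea C ps ds" and sub: "Ep \<subseteq> Ea"
    and "0 < i" "i < j" "j < length ps - 1" "ps ! i = ps ! j"
  shows "if ds ! (i - 1) \<and> \<not> ds ! j then ps ! i \<in> ancestors Ea C else ps ! i \<notin> C"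
proof -
  have ui: "unblocked_at Ea C ps ds i" and uj: "unblocked_at Ea C ps ds j"
    using cw assms(3-5) unfolding connecting_walk_def by auto
  show ?thesis
  proof (cases "ds ! (i - 1) \<and> \<not> ds ! j")
    case False
    then show ?thesis using ui uj assms(6) unfolding unblocked_at_def collider_at_def by auto
  next
    case True
    have "ps ! i \<in> ancestors Ea C"
    proof (cases "ds ! i")
      case False
      then show ?thesis using ui True unfolding unblocked_at_def collider_at_def by simp
    next
      case di: True
      show ?thesis using connecting_walk_forward_run[OF cw sub di] True assms(4,5) by simp
    qed
    then show ?thesis using True by simp
  qed
qed

lemma connecting_walk_skip_loop:
  assumes cw: "connecting_walk Ep Ea C ps ds" and sub: "Ep \<subseteq> Ea"
    and ij: "i < j" "j < length ps" "ps ! i = ps ! j"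
  shows "connecting_walk Ep Ea C (take i ps @ drop j ps) (take i ds @ drop j ds)"
proof -
  have w: "is_walk Ep ps ds" using cw unfolding connecting_walk_def by simp
  have lds: "length ds = length ps - 1" using w unfolding is_walk_def by simp
  define L where "L = length ps"
  define \<sigma> where "\<sigma> p = (if p < i then p else p - i + j)" for p
  define ps1 where "ps1 = take i ps @ drop j ps"
  define ds1 where "ds1 = take i ds @ drop j ds"
  have len1: "length ps1 = i + L - j" unfolding ps1_def L_def using ij by auto
  have lds1: "length ds1 = length ps1 - 1" unfolding ds1_def len1 using ij lds L_def by auto
  have nth1: "ps1 ! p = ps ! \<sigma> p" if "p < length ps1" for p
    using that ij unfolding ps1_def \<sigma>_def len1 L_def by (auto simp: nth_append add.commute)
  have dnth1: "ds1 ! p = ds ! \<sigma> p" if "p < length ds1" for p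
    using that ij lds unfolding ds1_def \<sigma>_def lds1 len1 L_def by (auto simp: nth_append add.commute)
  have nthS: "ps1 ! Suc p = ps ! Suc (\<sigma> p)" if "Suc p < length ps1" for p
  proof -
    have "ps1 ! Suc p = ps ! \<sigma> (Suc p)" using nth1 that by blast
    also have "\<dots> = ps ! Suc (\<sigma> p)"
      using ij unfolding \<sigma>_def by (cases "Suc p = i") (auto simp: Suc_diff_le)
    finally show ?thesis .
  qed
  have \<sigma>_interior: "\<sigma> p < L - 1" if "p < length ps1 - 1" for p
    using that ij unfolding \<sigma>_def len1 by auto
  have w1: "is_walk Ep ps1 ds1"
    unfolding is_walk_def
  proof (intro conjI allI impI)
    show "ps1 \<noteq> []" using len1 ij L_def by auto
    show "length ds1 = length ps1 - 1" by (rule lds1)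
    fix p assume "p < length ds1"
    then have "edge_at ps1 ds1 p = edge_at ps ds (\<sigma> p)"
      using nth1 nthS dnth1 lds1 unfolding edge_at_def by auto
    then show "edge_at ps1 ds1 p \<in> Ep"
      using w \<sigma>_interior \<open>p < length ds1\<close> lds1 lds L_def unfolding is_walk_def by auto
  qed
  have unblocked: "unblocked_at Ea C ps ds q" if "0 < q" "q < L - 1" for q
    using cw that L_def unfolding connecting_walk_def by auto
  have "unblocked_at Ea C ps1 ds1 p" if p: "0 < p" "p < length ps1 - 1" for p
  proof -
    have pd: "p < length ds1" "p - 1 < length ds1" using p lds1 by auto
    have col: "collider_at ds1 p = (ds ! \<sigma> (p - 1) \<and> \<not> ds ! \<sigma> p)"
      unfolding collider_at_def using dnth1 pd by auto
    have node: "ps1 ! p = ps ! \<sigma> p" using nth1 p by auto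
    show ?thesis
    proof (cases "p = i")
      case False
      then have "\<sigma> (p - 1) = \<sigma> p - 1" and "0 < \<sigma> p"
        using p ij unfolding \<sigma>_def by auto
      then show ?thesis
        using unblocked[of "\<sigma> p"] \<sigma>_interior[OF p(2)] col node
        unfolding unblocked_at_def collider_at_def by simp
    next
      case True
      have \<sigma>i: "\<sigma> (p - 1) = i - 1" "\<sigma> p = j" using True p unfolding \<sigma>_def by auto
      have "j < L - 1" using \<sigma>_interior[OF p(2)] \<sigma>i by simp
      then show ?thesis
        using connecting_walk_junction[OF cw sub _ ij(1) _ ij(3)] True p col node \<sigma>i L_def ij(3)
        unfolding unblocked_at_def by (auto split: if_splits)
    qed
  qed
  with w1 show ?thesis unfolding connecting_walk_def ps1_def ds1_def by blast
qed

lemma connecting_walk_to_path: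
  assumes "connecting_walk Ep Ea C ps ds" "Ep \<subseteq> Ea"
  shows "\<exists>ps' ds'. connecting_walk Ep Ea C ps' ds' \<and> distinct ps' \<and>
    hd ps' = hd ps \<and> last ps' = last ps"
  using assms(1)
proof (induction "length ps" arbitrary: ps ds rule: less_induct)
  case less
  show ?case
  proof (cases "distinct ps")
    case True
    then show ?thesis using less.prems by blast
  next
    case False
    then obtain i j where ij: "i < j" "j < length ps" "ps ! i = ps ! j"
      by (metis distinct_conv_nth linorder_neqE_nat)
    have "ps \<noteq> []" using less.prems unfolding connecting_walk_def is_walk_def by simp
    have "hd (take i ps @ drop j ps) = hd ps"
      using ij \<open>ps \<noteq> []\<close> by (cases "i = 0") (auto simp: hd_drop_conv_nth hd_conv_nth hd_append)
    moreover have "last (take i ps @ drop j ps) = last ps" using ij by simp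
    moreover have "length (take i ps @ drop j ps) < length ps" using ij by simp
    ultimately show ?thesis
      using less.hyps connecting_walk_skip_loop[OF less.prems assms(2) ij] by metis
  qed
qed

lemma is_walk_rev:
  assumes "is_walk E ps ds"
  shows "is_walk E (rev ps) (map Not (rev ds))"
proof -
  have ne: "ps \<noteq> []" and l: "length ds = length ps - 1"
    and e: "\<forall>k<length ds. edge_at ps ds k \<in> E"
    using assms unfolding is_walk_def by auto
  show ?thesis unfolding is_walk_def
  proof (intro conjI allI impI)
    show "rev ps \<noteq> []" using ne by simp
    show "length (map Not (rev ds)) = length (rev ps) - 1" using l by simp
    fix p assume p: "p < length (map Not (rev ds))"
    define q where "q = length ps - 2 - p"
    have q: "q < length ds" using p l unfolding q_def by auto
    have sq: "Suc q = length ps - 1 - p" using p l unfolding q_def by simp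
    have "rev ps ! p = ps ! Suc q" unfolding sq using p l by (simp add: rev_nth)
    moreover have "rev ps ! Suc p = ps ! q"
      using p l unfolding q_def by (auto simp: rev_nth Suc_diff_Suc)
    moreover have "map Not (rev ds) ! p = (\<not> ds ! q)"
      using p l unfolding q_def by (auto simp: rev_nth)
    ultimately have "edge_at (rev ps) (map Not (rev ds)) p = edge_at ps ds q"
      unfolding edge_at_def by auto
    then show "edge_at (rev ps) (map Not (rev ds)) p \<in> E" using e q by simp
  qed
qed

lemma connecting_walk_rev:
  assumes "connecting_walk E Ea C ps ds"
  shows "connecting_walk E Ea C (rev ps) (map Not (rev ds))"
proof -
  have w: "is_walk E ps ds" using assms unfolding connecting_walk_def by auto
  have l: "length ds = length ps - 1" using w unfolding is_walk_def by auto
  show ?thesis unfolding connecting_walk_def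
  proof (intro conjI allI impI)
    show "is_walk E (rev ps) (map Not (rev ds))" using is_walk_rev[OF w] .
    fix p assume p: "0 < p \<and> p < length (rev ps) - 1"
    define q where "q = length ps - 1 - p"
    have q: "0 < q" "q < length ps - 1" using p unfolding q_def by auto
    have "map Not (rev ds) ! p = (\<not> ds ! (q - 1))"
      using p l unfolding q_def by (auto simp: rev_nth)
    moreover have "map Not (rev ds) ! (p - 1) = (\<not> ds ! q)"
      using p l unfolding q_def by (auto simp: rev_nth Suc_diff_Suc)
    ultimately have "collider_at (map Not (rev ds)) p = collider_at ds q"
      unfolding collider_at_def by auto
    moreover have "rev ps ! p = ps ! q" using p unfolding q_def by (auto simp: rev_nth)
    moreover have "unblocked_at Ea C ps ds q" using assms q unfolding connecting_walk_def by auto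
    ultimately show "unblocked_at Ea C (rev ps) (map Not (rev ds)) p"
      unfolding unblocked_at_def by simp
  qed
qed

lemma is_walk_map:
  assumes "is_walk E ps ds" "\<And>p. p < length ds \<Longrightarrow> map_prod f f (edge_at ps ds p) \<in> F"
  shows "is_walk F (map f ps) ds"
proof -
  have "edge_at (map f ps) ds p = map_prod f f (edge_at ps ds p)" if "p < length ds" for p
    using that assms(1) unfolding is_walk_def edge_at_def by auto
  then show ?thesis using assms unfolding is_walk_def by auto
qed

lemma is_walk_nth_in_nodes:
  assumes "is_walk E ps ds" "E \<subseteq> Nd \<times> Nd" "2 \<le> length ps" "p < length ps"
  shows "ps ! p \<in> Nd"
proof (cases "p < length ds")
  case True
  then show ?thesis
    using assms unfolding is_walk_def edge_at_def by (auto split: if_splits)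
next
  case False
  then have "p - 1 < length ds" "Suc (p - 1) = p" using assms unfolding is_walk_def by auto
  then show ?thesis
    using assms unfolding is_walk_def edge_at_def by (force split: if_splits)
qed

lemma noncollider_out_edge:
  assumes "is_walk E ps ds" "0 < p" "p < length ps - 1" "\<not> collider_at ds p"
  obtains y where "(ps ! p, y) \<in> E"
proof -
  have l: "length ds = length ps - 1" using assms(1) unfolding is_walk_def by auto
  from assms(4) consider "\<not> ds ! (p - 1)" | "ds ! p" unfolding collider_at_def by auto
  then show ?thesis
  proof cases
    case 1
    moreover have "p - 1 < length ds" "Suc (p - 1) = p" using assms(2,3) l by auto
    ultimately have "(ps ! p, ps ! (p - 1)) \<in> E"
      using is_walk_backward_edge[OF assms(1)] by metis
    then show ?thesis using that by simp
  next
    case 2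
    then have "(ps ! p, ps ! Suc p) \<in> E" using is_walk_forward_edge[OF assms(1)] assms(3) l by simp
    then show ?thesis using that by blast
  qed
qed

lemma rtrancl_first_hit:
  assumes "(x, z) \<in> E\<^sup>*" "z \<in> c"
  shows "\<exists>us. us \<noteq> [] \<and> hd us = x \<and> last us \<in> c \<and>
           (\<forall>a < length us - 1. (us ! a, us ! Suc a) \<in> E \<and> us ! a \<notin> c) \<and>
           (\<forall>a < length us. (us ! a, last us) \<in> E\<^sup>*)"
  using assms
proof (induction rule: converse_rtrancl_induct)
  case base
  then show ?case by (intro exI[of _ "[z]"]) auto
next
  case (step x y)
  then obtain us where us: "us \<noteq> []" "hd us = y" "last us \<in> c"
     "\<forall>a < length us - 1. (us ! a, us ! Suc a) \<in> E \<and> us ! a \<notin> c"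
     "\<forall>a < length us. (us ! a, last us) \<in> E\<^sup>*" by blast
  have us0: "us ! 0 = y" "0 < length us" using us(1,2) by (auto simp: hd_conv_nth)
  show ?case
  proof (cases "x \<in> c")
    case True
    then show ?thesis by (intro exI[of _ "[x]"]) auto
  next
    case False
    have "((x # us) ! a, (x # us) ! Suc a) \<in> E \<and> (x # us) ! a \<notin> c"
      if "a < length (x # us) - 1" for a
      using that us us0 step.hyps(1) False by (cases a) auto
    moreover have "((x # us) ! a, last (x # us)) \<in> E\<^sup>*" if "a < length (x # us)" for a
      using that us us0 step.hyps(1) by (cases a) (auto intro: converse_rtrancl_into_rtrancl)
    ultimately show ?thesis using us by (intro exI[of _ "x # us"]) auto
  qed
qed

lemma rtrancl_map_rel:
  assumes "(x, y) \<in> E\<^sup>*" "\<And>a b. (a, b) \<in> E \<Longrightarrow> (f a, f b) \<in> F"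
  shows "(f x, f y) \<in> F\<^sup>*"
  using assms(1) by induction (auto intro: rtrancl_into_rtrancl assms(2))

lemma rtrancl_monotone_fun:
  fixes f :: "'a \<Rightarrow> 'b::preorder"
  assumes "(x, y) \<in> E\<^sup>*" "\<And>a b. (a, b) \<in> E \<Longrightarrow> f a \<le> f b"
  shows "f x \<le> f y"
  using assms(1) by induction (auto intro: order_trans assms(2))

locale time_series_dag =
  fixes Nd :: "('i \<times> nat) set" and E :: "(('i \<times> nat) \<times> ('i \<times> nat)) set"
    and k :: nat and N M C :: 'i
  assumes edges_in_nodes: "E \<subseteq> Nd \<times> Nd"
    and times_bounded: "x \<in> Nd \<Longrightarrow> snd x \<le> k"
    and time_mono: "(x, y) \<in> E \<Longrightarrow> snd x \<le> snd y"
    and contemporaneous: "(x, y) \<in> E \<Longrightarrow> snd x = snd y \<Longrightarrow> fst x = N \<and> (fst y = M \<or> fst y = C)"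
    and N_ne_M: "N \<noteq> M" and N_ne_C: "N \<noteq> C"
    and k_pos: "0 < k"
begin

lemma final_time_source: "(x, y) \<in> E \<Longrightarrow> snd x = k \<Longrightarrow> fst x = N"
  using edges_in_nodes times_bounded time_mono[of x y] contemporaneous[of x y] by fastforce

end

locale final_separation_setup = time_series_dag +
  fixes Dm :: "('i \<times> 'i) set" and A T :: 'i and S :: "'i set" and c :: "('i \<times> nat) set"
  assumes projects: "(x, y) \<in> E \<Longrightarrow> (fst x, fst y) \<in> Dm"
    and A_ne_T: "A \<noteq> T"
    and sources_in_cond: "(x, y) \<in> E \<Longrightarrow> fst x \<in> S \<Longrightarrow> x \<in> c"
    and cond_labels: "x \<in> c \<Longrightarrow> fst x \<in> S \<or> fst x = T"
    and T_nodes_cond: "x \<in> Nd \<Longrightarrow> fst x = T \<Longrightarrow> x \<in> c \<or> x = (T, k)"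
    and T_cond_past: "x \<in> c \<Longrightarrow> fst x = T \<Longrightarrow> snd x < k"
    and final_children: "((T, k), y) \<in> E \<Longrightarrow> y \<notin> c"

locale connecting_path_to_final = final_separation_setup +
  fixes ps :: "('i \<times> nat) list" and ds :: "bool list"
  assumes connecting: "connecting_walk E E c ps ds"
    and distinct_path: "distinct ps"
    and starts: "hd ps = (A, 0)"
    and ends: "last ps = (T, k)"
begin

lemma walk: "is_walk E ps ds"
  using connecting unfolding connecting_walk_def by simp

lemma length_ds: "length ds = length ps - 1"
  using walk unfolding is_walk_def by simp

lemma length_ps: "2 \<le> length ps"
proof (rule ccontr)
  assume "\<not> 2 \<le> length ps"
  moreover have "length ps \<noteq> 0" using walk unfolding is_walk_def by simp
  ultimately have "length ps = 1" by linarith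
  then show False using starts ends A_ne_T by (cases ps) auto
qed

lemma ps_nonempty: "ps \<noteq> []"
  using length_ps by auto

lemma first_node: "ps ! 0 = (A, 0)"
  using starts ps_nonempty by (simp add: hd_conv_nth)

lemma final_node: "ps ! (length ps - 1) = (T, k)"
  using ends ps_nonempty by (simp add: last_conv_nth)

lemma nodes: "p < length ps \<Longrightarrow> ps ! p \<in> Nd"
  using is_walk_nth_in_nodes[OF walk edges_in_nodes length_ps] .

lemma unblocked: "0 < p \<Longrightarrow> p < length ps - 1 \<Longrightarrow> unblocked_at E c ps ds p"
  using connecting unfolding connecting_walk_def by simp

definition first_T :: nat where
  "first_T = (LEAST j. fst (ps ! j) = T)"

lemma first_T_label: "fst (ps ! first_T) = T"
  and first_T_le: "first_T \<le> length ps - 1"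
  and before_first_T: "p < first_T \<Longrightarrow> fst (ps ! p) \<noteq> T"
  using LeastI[of "\<lambda>j. fst (ps ! j) = T" "length ps - 1"]
    Least_le[of "\<lambda>j. fst (ps ! j) = T" "length ps - 1"]
    not_less_Least[of p "\<lambda>j. fst (ps ! j) = T"] final_node
  unfolding first_T_def by auto

lemma first_T_pos: "0 < first_T"
  using first_T_label first_node A_ne_T by (cases first_T) auto

text \<open>Were the first T-node a parent of its predecessor, it would either be an interior
  noncollider in c, or it would be (T, k), whose children live at time k, have no children
  themselves and would have to be colliders in an(c), hence in c.\<close>
lemma first_T_entered_forward: "ds ! (first_T - 1)"
proof (rule ccontr)
  let ?j = first_T
  assume backward: "\<not> ds ! (?j - 1)"
  have parent: "(ps ! ?j, ps ! (?j - 1)) \<in> E"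
    using is_walk_backward_edge[OF walk _ backward] first_T_pos first_T_le length_ds by simp
  show False
  proof (cases "?j = length ps - 1")
    case True
    define y where "y = ps ! (?j - 1)"
    have Ty: "((T, k), y) \<in> E" using parent True final_node y_def by simp
    have "snd y \<le> k" using times_bounded[OF nodes, of "?j - 1"] first_T_le length_ps y_def by simp
    with time_mono[OF Ty] have "snd y = k" by simp
    have y_leaf: "(y, z) \<notin> E" for z
    proof
      assume "(y, z) \<in> E"
      then have "fst y = N" using final_time_source \<open>snd y = k\<close> by blast
      moreover have "fst y = M \<or> fst y = C" using contemporaneous[OF Ty] \<open>snd y = k\<close> by simp
      ultimately show False using N_ne_M N_ne_C by auto
    qed
    have "?j - 1 \<noteq> 0" using \<open>snd y = k\<close> k_pos first_node y_def by auto
    then have interior: "0 < ?j - 1" "?j - 1 < length ps - 1" using True length_ps by auto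
    have "ds ! (?j - 1 - 1)"
    proof (rule ccontr)
      assume "\<not> ds ! (?j - 1 - 1)"
      moreover have "?j - 1 - 1 < length ds" "Suc (?j - 1 - 1) = ?j - 1"
        using interior length_ds by auto
      ultimately have "(y, ps ! (?j - 1 - 1)) \<in> E"
        using is_walk_backward_edge[OF walk] y_def by metis
      then show False using y_leaf by blast
    qed
    then have "collider_at ds (?j - 1)" using backward unfolding collider_at_def by simp
    then have "y \<in> ancestors E c"
      using unblocked[OF interior] y_def unfolding unblocked_at_def by simp
    then have "y \<in> c" using y_leaf unfolding ancestors_def by (blast elim: converse_rtranclE)
    then show False using final_children[OF Ty] by simp
  next
    case False
    then have interior: "0 < ?j" "?j < length ps - 1" using first_T_pos first_T_le by auto
    have "ps ! ?j \<noteq> ps ! (length ps - 1)"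
      using nth_eq_iff_index_eq[OF distinct_path] interior by simp
    then have "ps ! ?j \<in> c" using T_nodes_cond[OF nodes first_T_label] interior final_node by auto
    moreover have "\<not> collider_at ds ?j" using backward unfolding collider_at_def by simp
    ultimately show False using unblocked[OF interior] unfolding unblocked_at_def by simp
  qed
qed

text \<open>The prefix of the path is kept up to the first collider whose label is not an ancestor of
  S in Dm (or up to the first T-node if there is none); from there a directed path in E leads
  into c, and by the choice of that collider it must end in a T-node.\<close>
lemma collider_detour:
  obtains i us where "0 < i" "i \<le> first_T" "us \<noteq> []" "hd us = ps ! i"
    "\<And>a. a < length us - 1 \<Longrightarrow> (us ! a, us ! Suc a) \<in> E \<and> us ! a \<notin> c \<and> fst (us ! a) \<noteq> T"
    "fst (last us) = T"
    "\<And>p. 0 < p \<Longrightarrow> p < i \<Longrightarrow> collider_at ds p \<Longrightarrow> fst (ps ! p) \<in> ancestors Dm S"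
proof -
  define bad where
    "bad p \<longleftrightarrow> 0 < p \<and> p < first_T \<and> collider_at ds p \<and> fst (ps ! p) \<notin> ancestors Dm S" for p
  show ?thesis
  proof (cases "\<exists>p. bad p")
    case False
    show ?thesis
      by (rule that[of first_T "[ps ! first_T]"])
        (use False first_T_pos first_T_label in \<open>auto simp: bad_def\<close>)
  next
    case True
    define i where "i = (LEAST p. bad p)"
    have "bad i" unfolding i_def using True LeastI_ex by metis
    then have i: "0 < i" "i < first_T" "collider_at ds i" "fst (ps ! i) \<notin> ancestors Dm S"
      unfolding bad_def by auto
    have before_i: "\<not> bad p" if "p < i" for p using that not_less_Least unfolding i_def by blast
    have "ps ! i \<in> ancestors E c"
      using unblocked[of i] i first_T_le unfolding unblocked_at_def by auto
    then obtain z where "z \<in> c" "(ps ! i, z) \<in> E\<^sup>*" unfolding ancestors_def by auto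
    from rtrancl_first_hit[OF this(2,1)] obtain us where us: "us \<noteq> []" "hd us = ps ! i"
      "last us \<in> c" "\<forall>a < length us - 1. (us ! a, us ! Suc a) \<in> E \<and> us ! a \<notin> c"
      "\<forall>a < length us. (us ! a, last us) \<in> E\<^sup>*" by blast
    have "(ps ! i, last us) \<in> E\<^sup>*"
      using us(1,2,5) by (metis hd_conv_nth length_greater_0_conv)
    then have "(fst (ps ! i), fst (last us)) \<in> Dm\<^sup>*"
      using rtrancl_map_rel[of _ _ E fst Dm] projects by blast
    then have "fst (last us) \<notin> S" using i(4) unfolding ancestors_def by blast
    then have last_T: "fst (last us) = T" using cond_labels us(3) by blast
    have "fst (us ! a) \<noteq> T" if "a < length us - 1" for a
    proof
      assume "fst (us ! a) = T"
      moreover have "us ! a \<in> Nd" using us(4) that edges_in_nodes by blast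
      ultimately have "us ! a = (T, k)" using T_nodes_cond us(4) that by blast
      moreover have "snd (us ! a) \<le> snd (last us)"
        using rtrancl_monotone_fun[of _ _ E snd] us(5) that time_mono by simp
      ultimately show False using T_cond_past us(3) last_T by fastforce
    qed
    with us last_T i before_i show ?thesis
      by (intro that[of i us]) (auto simp: bad_def)
  qed
qed

context
  fixes i :: nat and us :: "('i \<times> nat) list"
  assumes i_pos: "0 < i" and i_le: "i \<le> first_T" and us_nonempty: "us \<noteq> []"
    and us_start: "hd us = ps ! i"
    and us_steps: "\<And>a. a < length us - 1 \<Longrightarrow>
      (us ! a, us ! Suc a) \<in> E \<and> us ! a \<notin> c \<and> fst (us ! a) \<noteq> T"
    and us_end: "fst (last us) = T"
    and colliders_before_i: "\<And>p. 0 < p \<Longrightarrow> p < i \<Longrightarrow> collider_at ds p \<Longrightarrow>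
      fst (ps ! p) \<in> ancestors Dm S"
begin

definition detour_nodes :: "('i \<times> nat) list" where
  "detour_nodes = take i ps @ us"

definition detour_dirs :: "bool list" where
  "detour_dirs = take i ds @ replicate (length us - 1) True"

lemma i_lt: "i < length ps"
  using i_le first_T_le length_ps by linarith

lemma length_detour_nodes: "length detour_nodes = i + length us"
  unfolding detour_nodes_def using i_lt by simp

lemma length_detour_dirs: "length detour_dirs = length detour_nodes - 1"
proof -
  have "length detour_dirs = i + (length us - 1)"
    unfolding detour_dirs_def using i_lt length_ds by simp
  then show ?thesis using length_detour_nodes us_nonempty by (cases us) auto
qed

lemma nth_detour_nodes:
  "p < length detour_nodes \<Longrightarrow> detour_nodes ! p = (if p < i then ps ! p else us ! (p - i))"
  unfolding detour_nodes_def using i_lt by (simp add: nth_append)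

lemma nth_detour_dirs:
  "p < length detour_dirs \<Longrightarrow> detour_dirs ! p = (p < i \<longrightarrow> ds ! p)"
  unfolding detour_dirs_def using i_lt length_ds length_detour_dirs length_detour_nodes
  by (simp add: nth_append)

text \<open>Only the edge into the first T-node needs an argument: it points forward.\<close>
lemma detour_edge:
  assumes p: "p < length detour_dirs"
  shows "edge_at detour_nodes detour_dirs p \<in> E \<and> fst (fst (edge_at detour_nodes detour_dirs p)) \<noteq> T"
proof (cases "p < i")
  case True
  have "detour_nodes ! Suc p = ps ! Suc p"
  proof (cases "Suc p < i")
    case False
    then have "Suc p = i" using True by simp
    then show ?thesis
      using nth_detour_nodes[of "Suc p"] p length_detour_dirs us_start us_nonempty
      by (simp add: hd_conv_nth)
  qed (use nth_detour_nodes[of "Suc p"] p length_detour_dirs in simp)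
  then have edge: "edge_at detour_nodes detour_dirs p = edge_at ps ds p"
    using nth_detour_nodes[of p] nth_detour_dirs[OF p] p length_detour_dirs True
    unfolding edge_at_def by simp
  have "p < length ds" using True i_lt length_ds by simp
  then have "edge_at ps ds p \<in> E" using walk unfolding is_walk_def by simp
  moreover have "fst (fst (edge_at ps ds p)) \<noteq> T"
  proof (cases "ds ! p")
    case True
    then show ?thesis using before_first_T \<open>p < i\<close> i_le unfolding edge_at_def by simp
  next
    case False
    then have "Suc p \<noteq> first_T" using first_T_entered_forward by (metis diff_Suc_1)
    then show ?thesis using before_first_T \<open>p < i\<close> i_le False unfolding edge_at_def by simp
  qed
  ultimately show ?thesis using edge by simp
next
  case False
  define a where "a = p - i"
  have a: "a < length us - 1" using p False length_detour_dirs length_detour_nodes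
    unfolding a_def by simp
  have "detour_nodes ! p = us ! a" "detour_nodes ! Suc p = us ! Suc a"
    using nth_detour_nodes[of p] nth_detour_nodes[of "Suc p"] False p length_detour_dirs
    unfolding a_def by (auto simp: Suc_diff_le)
  moreover have "detour_dirs ! p" using nth_detour_dirs[OF p] False by simp
  ultimately have "edge_at detour_nodes detour_dirs p = (us ! a, us ! Suc a)"
    unfolding edge_at_def by simp
  then show ?thesis using us_steps[OF a] by simp
qed

lemma detour_walk: "is_walk E detour_nodes detour_dirs"
  using detour_edge length_detour_dirs us_nonempty
  unfolding is_walk_def detour_nodes_def by simp

text \<open>Colliders of the detour are colliders of the kept prefix; every noncollider has a child
  in E and lies outside c, so its label is not in S.\<close>
lemma detour_projection_connects:
  "connecting_walk {e \<in> Dm. fst e \<notin> {T}} Dm S (map fst detour_nodes) detour_dirs"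
  unfolding connecting_walk_def
proof (intro conjI allI impI)
  have "map_prod fst fst (edge_at detour_nodes detour_dirs q) \<in> {e \<in> Dm. fst e \<notin> {T}}"
    if "q < length detour_dirs" for q
  proof -
    obtain x y where "edge_at detour_nodes detour_dirs q = (x, y)" by (cases "edge_at detour_nodes detour_dirs q")
    then show ?thesis using detour_edge[OF that] projects[of x y] by simp
  qed
  then show "is_walk {e \<in> Dm. fst e \<notin> {T}} (map fst detour_nodes) detour_dirs"
    using is_walk_map[OF detour_walk] by blast
  fix p assume p: "0 < p \<and> p < length (map fst detour_nodes) - 1"
  then have p_lt: "p < length detour_nodes - 1" by simp
  have "p < length detour_dirs" "p - 1 < length detour_dirs" using p_lt length_detour_dirs by auto
  then have col: "collider_at detour_dirs p = (p < i \<and> collider_at ds p)"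
    unfolding collider_at_def using nth_detour_dirs by auto
  have node: "map fst detour_nodes ! p = fst (detour_nodes ! p)" using p_lt by simp
  show "unblocked_at Dm S (map fst detour_nodes) detour_dirs p"
  proof (cases "collider_at detour_dirs p")
    case True
    then show ?thesis
      using col colliders_before_i p nth_detour_nodes[of p] p_lt
      unfolding unblocked_at_def node by auto
  next
    case False
    obtain y where y: "(detour_nodes ! p, y) \<in> E"
      using noncollider_out_edge[OF detour_walk _ p_lt False] p by blast
    have "detour_nodes ! p \<notin> c"
    proof (cases "p < i")
      case True
      then have "\<not> collider_at ds p" using col False by simp
      then have "ps ! p \<notin> c"
        using unblocked[of p] p True i_lt unfolding unblocked_at_def by simp
      then show ?thesis using nth_detour_nodes[of p] p_lt True by simp
    next
      case False
      then have "p - i < length us - 1" using p_lt length_detour_nodes by simp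
      then show ?thesis using nth_detour_nodes[of p] p_lt False us_steps by simp
    qed
    then have "fst (detour_nodes ! p) \<notin> S" using sources_in_cond y by blast
    then show ?thesis using False unfolding unblocked_at_def node by simp
  qed
qed

lemma detour_projection_ends:
  "hd (map fst detour_nodes) = A" "last (map fst detour_nodes) = T"
  using i_pos i_lt first_node us_nonempty us_end ps_nonempty
  unfolding detour_nodes_def by (auto simp: hd_append hd_conv_nth last_map)

end

lemma delta_connecting_path:
  "\<exists>ps' ds'. connecting_walk {e \<in> Dm. fst e \<notin> {T}} Dm S ps' ds' \<and> distinct ps' \<and>
     hd ps' = A \<and> last ps' = T"
proof -
  obtain i us where detour: "0 < i" "i \<le> first_T" "us \<noteq> []" "hd us = ps ! i"
    "\<And>a. a < length us - 1 \<Longrightarrow> (us ! a, us ! Suc a) \<in> E \<and> us ! a \<notin> c \<and> fst (us ! a) \<noteq> T"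
    "fst (last us) = T"
    "\<And>p. 0 < p \<Longrightarrow> p < i \<Longrightarrow> collider_at ds p \<Longrightarrow> fst (ps ! p) \<in> ancestors Dm S"
    by (rule collider_detour) (rule that)
  have walk: "connecting_walk {e \<in> Dm. fst e \<notin> {T}} Dm S
      (map fst (detour_nodes i us)) (detour_dirs i us)"
    using detour by (rule detour_projection_connects)
  have start: "hd (map fst (detour_nodes i us)) = A"
    using detour by (rule detour_projection_ends(1))
  have stop: "last (map fst (detour_nodes i us)) = T"
    using detour by (rule detour_projection_ends(2))
  have "{e \<in> Dm. fst e \<notin> {T}} \<subseteq> Dm" by blast
  from connecting_walk_to_path[OF walk this] show ?thesis unfolding start stop .
qed

end

lemma (in final_separation_setup) d_separated_if_delta_separated:
  assumes "separated {e \<in> Dm. fst e \<notin> {T}} Dm {A} {T} S"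
  shows "d_separated E {(A, 0)} {(T, k)} c"
  unfolding d_separated_def separated_iff_no_connecting_path
proof
  assume "\<exists>ps ds. connecting_walk E E c ps ds \<and> distinct ps \<and>
    (hd ps \<in> {(A, 0)} \<and> last ps \<in> {(T, k)} \<or> hd ps \<in> {(T, k)} \<and> last ps \<in> {(A, 0)})"
  then obtain ps ds where "connecting_walk E E c ps ds" "distinct ps" "hd ps = (A, 0)" "last ps = (T, k)"
  proof (elim exE conjE disjE)
    fix ps ds
    assume path: "connecting_walk E E c ps ds" "distinct ps"
      and "hd ps \<in> {(T, k)}" "last ps \<in> {(A, 0)}"
    moreover have "ps \<noteq> []" using path unfolding connecting_walk_def is_walk_def by simp
    ultimately show thesis
      using that[OF connecting_walk_rev[OF path(1)]] by (simp add: hd_rev last_rev)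
  qed auto
  then interpret connecting_path_to_final Nd E k N M C Dm A T S c ps ds
    by unfold_locales
  obtain ps' ds' where "connecting_walk {e \<in> Dm. fst e \<notin> {T}} Dm S ps' ds'" "distinct ps'"
    "hd ps' = A" "last ps' = T"
    using delta_connecting_path by blast
  with assms show False unfolding separated_iff_no_connecting_path by blast
qed

lemma unrolled_edge_in_rolled_graph:
  assumes "1 \<le> t" "((i, s), (j, u)) \<in> E t" "s \<le> u"
  shows "(i, j) \<in> minus_graph (\<Union>t\<in>{1..}. rolled_plain (E t)) (\<Union>t\<in>{1..}. rolled_tailed (E t))"
  using assms unfolding minus_graph_def rolled_plain_def rolled_tailed_def by blast

locale unrolled_time_series =
  fixes V W :: "'i set" and N M C :: 'i and E :: "nat \<Rightarrow> (('i \<times> nat) \<times> ('i \<times> nat)) set"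
    and k :: nat
  assumes V_W_disjoint: "V \<inter> W = {}"
    and N_ne_M: "N \<noteq> M" and N_ne_C: "N \<noteq> C"
    and dag: "\<And>t. t \<ge> 1 \<Longrightarrow> is_dag_on (unrolled_nodes V W t) (E t)"
    and time_order: "\<And>t i s j u. t \<ge> 1 \<Longrightarrow> ((i, s), (j, u)) \<in> E t \<Longrightarrow> s \<le> u"
    and contemp: "\<And>t i j s. t \<ge> 1 \<Longrightarrow> ((i, s), (j, s)) \<in> E t \<Longrightarrow> i = N \<and> (j = M \<or> j = C)"
    and k_ge_1: "k \<ge> 1"
begin

sublocale time_series_dag "unrolled_nodes V W k" "E k" k N M C
proof
  show "E k \<subseteq> unrolled_nodes V W k \<times> unrolled_nodes V W k"
    using dag[OF k_ge_1] unfolding is_dag_on_def by simp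
  show "snd x \<le> snd y" if "(x, y) \<in> E k" for x y
    using that time_order[OF k_ge_1] by (cases x, cases y) simp
  show "fst x = N \<and> (fst y = M \<or> fst y = C)" if "(x, y) \<in> E k" "snd x = snd y" for x y
    using that contemp[OF k_ge_1] by (cases x, cases y) simp
qed (use k_ge_1 N_ne_M N_ne_C in \<open>auto simp: unrolled_nodes_def\<close>)

lemma d_separated_if_delta_separated_rolled:
  assumes "delta_separated (\<Union>t\<in>{1..}. rolled_plain (E t)) (\<Union>t\<in>{1..}. rolled_tailed (E t))
      {T} {A} S"
    and "A \<in> W" "T \<in> V"
    and S_in_cond: "\<And>i s. (i, s) \<in> unrolled_nodes V W k \<Longrightarrow> i \<in> S \<Longrightarrow> s < k \<or> i = N \<Longrightarrow> (i, s) \<in> c"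
    and cond_labels: "\<And>x. x \<in> c \<Longrightarrow> fst x \<in> S \<or> fst x = T"
    and T_past_in_cond: "\<And>s. s < k \<Longrightarrow> (T, s) \<in> c"
    and T_cond_past: "\<And>s. (T, s) \<in> c \<Longrightarrow> s < k"
    and cond_past_if_N: "\<And>x. T = N \<Longrightarrow> x \<in> c \<Longrightarrow> snd x < k"
  shows "d_separated (E k) {(A, 0)} {(T, k)} c"
proof -
  define Dm where "Dm = minus_graph (\<Union>t\<in>{1..}. rolled_plain (E t)) (\<Union>t\<in>{1..}. rolled_tailed (E t))"
  interpret final_separation_setup "unrolled_nodes V W k" "E k" k N M C Dm A T S c
  proof
    show "(fst x, fst y) \<in> Dm" if "(x, y) \<in> E k" for x y
      using that unrolled_edge_in_rolled_graph[OF k_ge_1] time_order[OF k_ge_1] unfolding Dm_def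
      by (metis prod.collapse)
    show "A \<noteq> T" using \<open>A \<in> W\<close> \<open>T \<in> V\<close> V_W_disjoint by auto
    show "x \<in> c" if "(x, y) \<in> E k" "fst x \<in> S" for x y
      using that edges_in_nodes final_time_source times_bounded S_in_cond
      by (metis le_neq_implies_less mem_Sigma_iff prod.collapse subsetD)
    show "x \<in> c \<or> x = (T, k)" if "x \<in> unrolled_nodes V W k" "fst x = T" for x
      using that T_past_in_cond times_bounded by (metis le_neq_implies_less prod.collapse)
    show "snd x < k" if "x \<in> c" "fst x = T" for x
      using that T_cond_past by (metis prod.collapse)
    show "y \<notin> c" if Ty: "((T, k), y) \<in> E k" for y
    proof
      assume "y \<in> c"
      have "snd y = k" using time_mono[OF Ty] times_bounded edges_in_nodes Ty by fastforce
      then have "T = N" using contemporaneous[OF Ty] by simp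
      then show False using cond_past_if_N \<open>y \<in> c\<close> \<open>snd y = k\<close> by fastforce
    qed
  qed (rule cond_labels)
  show ?thesis
    using d_separated_if_delta_separated assms(1) unfolding delta_separated_def Dm_def by simp
qed

end

theorem proposition2:
  fixes Pr :: "'a measure"
    and X :: "'i \<times> nat \<Rightarrow> 'a \<Rightarrow> 'b"
    and Sp :: "'i \<times> nat \<Rightarrow> 'b measure"
    and V W :: "'i set"
    and N M C AD AM :: 'i
    and E :: "nat \<Rightarrow> (('i \<times> nat) \<times> ('i \<times> nat)) set"
    and k :: nat
  assumes "prob_space Pr"
    and "finite V" "finite W" "V \<inter> W = {}"
    and "N \<in> V" "M \<in> V" "C \<in> V" "N \<noteq> M" "N \<noteq> C" "M \<noteq> C"
    and "AD \<in> W" "AM \<in> W" "AD \<noteq> AM"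
    and meas: "\<And>n. n \<in> (\<Union>t. unrolled_nodes V W t) \<Longrightarrow> X n \<in> Pr \<rightarrow>\<^sub>M Sp n"
    and dag: "\<And>t. t \<ge> 1 \<Longrightarrow> is_dag_on (unrolled_nodes V W t) (E t)"
    and time_order: "\<And>t i s j u. t \<ge> 1 \<Longrightarrow> ((i, s), (j, u)) \<in> E t \<Longrightarrow> s \<le> u"
    and standing: "\<And>t i j u. t \<ge> 1 \<Longrightarrow> ((i, u), (j, u)) \<in> E t \<Longrightarrow>
                     \<exists>s r. s < r \<and> ((i, s), (j, r)) \<in> E t"
    and markov: "\<And>t a b c. t \<ge> 1 \<Longrightarrow> a \<subseteq> unrolled_nodes V W t \<Longrightarrow>
                   b \<subseteq> unrolled_nodes V W t \<Longrightarrow> c \<subseteq> unrolled_nodes V W t \<Longrightarrow>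
                   d_separated (E t) a b c \<Longrightarrow> cond_indep Pr X Sp a b c"
    and contemp: "\<And>t i j s. t \<ge> 1 \<Longrightarrow> ((i, s), (j, s)) \<in> E t \<Longrightarrow>
                   i = N \<and> (j = M \<or> j = C)"
    and "k \<ge> 1"
  shows
    "(delta_separated (\<Union>t\<in>{1..}. rolled_plain (E t)) (\<Union>t\<in>{1..}. rolled_tailed (E t))
        {M} {AD} {AM, C, N} \<longrightarrow>
      cond_indep Pr X Sp {(AD, 0)} {(M, k)}
        ({(AM, 0)} \<union> {(M, s) | s. s \<le> k - 1} \<union> {(C, s) | s. s \<le> k - 1} \<union> {(N, s) | s. s \<le> k}))
   \<and> (delta_separated (\<Union>t\<in>{1..}. rolled_plain (E t)) (\<Union>t\<in>{1..}. rolled_tailed (E t))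
        {C} {AM} {AD, M, N} \<longrightarrow>
      cond_indep Pr X Sp {(AM, 0)} {(C, k)}
        ({(AD, 0)} \<union> {(M, s) | s. s \<le> k} \<union> {(C, s) | s. s \<le> k - 1} \<union> {(N, s) | s. s \<le> k}))
   \<and> (delta_separated (\<Union>t\<in>{1..}. rolled_plain (E t)) (\<Union>t\<in>{1..}. rolled_tailed (E t))
        {N} {AM} {AD, C, M} \<longrightarrow>
      cond_indep Pr X Sp {(AM, 0)} {(N, k)}
        ({(AD, 0)} \<union> {(M, s) | s. s \<le> k - 1} \<union> {(C, s) | s. s \<le> k - 1} \<union> {(N, s) | s. s \<le> k - 1}))"
proof -
  interpret unrolled_time_series V W N M C E k
    by unfold_locales (use assms in auto)
  have cond_indep_if_d_separated: "cond_indep Pr X Sp {(A, 0)} {(T, k)} c"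
    if "d_separated (E k) {(A, 0)} {(T, k)} c" "A \<in> W" "T \<in> V" "c \<subseteq> unrolled_nodes V W k"
    for A T c
    using markov[OF \<open>k \<ge> 1\<close>] that unfolding unrolled_nodes_def by auto
  have labels: "AD \<notin> V" "AM \<notin> V" "N \<in> V" "M \<in> V" "C \<in> V" "AD \<in> W" "AM \<in> W"
    "N \<noteq> M" "N \<noteq> C" "M \<noteq> C"
    using assms(4-13) by auto
  show ?thesis
    by (intro conjI impI cond_indep_if_d_separated;
        (erule d_separated_if_delta_separated_rolled)?)
      (use labels k_ge_1 in \<open>auto simp: unrolled_nodes_def\<close>)
qed

end
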